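(* Let $d\ge 1$, $s\in\mathbb{N}$, and let $\mathbf{u}\in\mathbb{C}^d$ have i.i.d. entries $u_j\sim\mathcal{CN}(0,1)$. For all $\mathbf{x},\mathbf{y}\in\mathbb{R}^d$, $$k_{2s}(\mathbf{x},\mathbf{y}):=\mathbb{E}\big[\,|\mathbf{x}^\top\mathbf{u}|^{2s}\,|\mathbf{y}^\top\mathbf{u}|^{2s}\,\big]=\sum_{i=0}^{s}(s!)^2\binom{s}{i}^2\,(\mathbf{x}^\top\mathbf{y})^{2i}\,\big(\|\mathbf{x}\|_2\|\mathbf{y}\|_2\big)^{2(s-i)} .$$ Equivalently, for nonzero $\mathbf{x},\mathbf{y}$ with $\cos\theta=\frac{\mathbf{x}^\top\mathbf{y}}{\|\mathbf{x}\|_2\|\mathbf{y}\|_2}$, $k_{2s}(\mathbf{x},\mathbf{y})=\|\mathbf{x}\|_2^{2s}\|\mathbf{y}\|_2^{2s}\sum_{i=0}^s(s!)^2\binom{s}{i}^2\cos^{2i}\theta$. Consequently, with $\mathbf{U}\in\mathbb{C}^{D\times d}$ having i.i.d. $\mathcal{CN}(0,1)$ entries and $\phi(\mathbf{x})=\frac{1}{\sqrt D}|\mathbf{U}\mathbf{x}|^{2s}$ (entrywise), $\phi(\mathbf{x})^\top\phi(\mathbf{y})\to k_{2s}(\mathbf{x},\mathbf{y})$ almost surely as $D\to\infty$.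
   Context: $\mathcal{CN}(0,1)$ denotes the standard circularly-symmetric complex Gaussian distribution: $u=a+ib$ with $a,b$ independent real $\mathcal{N}(0,1/2)$, so $\mathbb{E}|u|^2=1$. For $\mathbf{x}\in\mathbb{R}^d$ and $\mathbf{u}\in\mathbb{C}^d$, $\mathbf{x}^\top\mathbf{u}=\sum_j x_j u_j$ (no conjugation). $\|\cdot\|_2$ is the Euclidean norm. The rows of $\mathbf{U}$ are i.i.d. copies of $\mathbf{u}$, and $|\cdot|^{2s}$ applied to a vector acts entrywise. *)

theory Defs
  imports "HOL-Probability.Probability"
begin

text \<open>Standard circularly-symmetric complex Gaussian CN(0,1): the law of a + i b
  with a, b independent real normal variables of mean 0 and variance 1/2.\<close>
definition std_complex_normal :: "complex measure" where
  "std_complex_normal =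
     distr (density lborel (normal_density 0 (sqrt (1/2)))
            \<Otimes>\<^sub>M density lborel (normal_density 0 (sqrt (1/2))))
           borel (\<lambda>(a, b). Complex a b)"

definition rc_dot :: "real ^ 'd \<Rightarrow> ('d \<Rightarrow> complex) \<Rightarrow> complex" where
  "rc_dot x u = (\<Sum>j\<in>UNIV. complex_of_real (x $ j) * u j)"

end

theory Submission
  imports Defs "HOL-Computational_Algebra.Polynomial" "HOL-Library.Discrete_Functions"
begin

(*
  Write a = x^T u and b = y^T u. Gaussian integration by parts, E[u_j F(u)] = E[dF/d conj(u_j)],
  turns the mixed moments m(p, q, r, w) = E[a^p conj(a)^q b^r conj(b)^w] into a recursion:
  raising p (or r) by one removes one conjugate factor and brings in |x|^2, x^T y or |y|^2.
  Its solution counts Wick pairings and yields the closed form of m(s, s, s, s) = E[|a|^2s |b|^2s].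
  The random-feature inner product is the empirical mean of the i.i.d. nonnegative variables
  |x^T U_k|^2s |y^T U_k|^2s, which have finite variance; Chebyshev and Borel-Cantelli give
  almost sure convergence along the squares, and monotonicity of the partial sums fills the gaps.
*)

section \<open>Gaussian integration by parts on the real line\<close>

definition centered_normal :: "real \<Rightarrow> real measure" where
  "centered_normal \<sigma> = density lborel (normal_density 0 \<sigma>)"

lemma sets_centered_normal [measurable_cong, simp]: "sets (centered_normal \<sigma>) = sets borel"
  by (simp add: centered_normal_def)

lemma space_centered_normal [simp]: "space (centered_normal \<sigma>) = UNIV"
  by (simp add: centered_normal_def)

context
  fixes \<sigma> :: real
  assumes \<sigma>_pos: "0 < \<sigma>"
begin

lemma prob_space_centered_normal: "prob_space (centered_normal \<sigma>)"
  unfolding centered_normal_def using \<sigma>_pos by (rule prob_space_normal_density)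

lemma integrable_centered_normal_power: "integrable (centered_normal \<sigma>) (\<lambda>t. t ^ n)"
  unfolding centered_normal_def using integrable_normal_moment[OF \<sigma>_pos, of 0 n]
  by (subst integrable_density) auto

lemma integrable_centered_normal_abs_power: "integrable (centered_normal \<sigma>) (\<lambda>t. \<bar>t\<bar> ^ n)"
  unfolding centered_normal_def using integrable_normal_moment_abs[OF \<sigma>_pos, of 0 n]
  by (subst integrable_density) auto

lemma integral_centered_normal_power:
  "(\<integral>t. t ^ n \<partial>centered_normal \<sigma>) = (\<integral>t. normal_density 0 \<sigma> t * t ^ n \<partial>lborel)"
  unfolding centered_normal_def by (subst integral_density) auto

lemma integral_centered_normal_power_odd: "(\<integral>t. t ^ (2 * k + 1) \<partial>centered_normal \<sigma>) = 0"
  unfolding integral_centered_normal_power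
  using integral_normal_moment_odd[OF \<sigma>_pos, of 0 k] by (simp only: diff_zero)

lemma integral_centered_normal_power_even:
  "(\<integral>t. t ^ (2 * k) \<partial>centered_normal \<sigma>) = fact (2 * k) / ((2 / \<sigma>\<^sup>2) ^ k * fact k)"
  unfolding integral_centered_normal_power
  using integral_normal_moment_even[OF \<sigma>_pos, of 0 k] by (simp only: diff_zero)

lemma integral_centered_normal_power_Suc:
  "(\<integral>t. t ^ Suc n \<partial>centered_normal \<sigma>) = \<sigma>\<^sup>2 * n * (\<integral>t. t ^ (n - 1) \<partial>centered_normal \<sigma>)"
proof (cases "even n")
  case True
  then obtain k where n: "n = 2 * k" by blast
  show ?thesis
  proof (cases k)
    case (Suc k')
    then have "n - 1 = 2 * k' + 1" "Suc n = 2 * k + 1" using n by simp_all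
    then show ?thesis by (simp only: integral_centered_normal_power_odd)
  qed (use n integral_centered_normal_power_odd[of 0] in simp)
next
  case False
  then obtain k where n: "n = 2 * k + 1" by (metis oddE)
  then have "Suc n = 2 * Suc k" "n - 1 = 2 * k" by simp_all
  moreover have "fact (2 * Suc k) / ((2 / \<sigma>\<^sup>2) ^ Suc k * fact (Suc k))
      = \<sigma>\<^sup>2 * real n * (fact (2 * k) / ((2 / \<sigma>\<^sup>2) ^ k * fact k))"
  proof -
    have "fact (2 * Suc k) / ((2 / \<sigma>\<^sup>2) ^ Suc k * fact (Suc k))
        = (2 * (k + 1)) / ((2 / \<sigma>\<^sup>2) * (k + 1)) * real n * (fact (2 * k) / ((2 / \<sigma>\<^sup>2) ^ k * fact k))"
    proof -
      have "(2 / \<sigma>\<^sup>2) ^ k > 0" "(fact k :: real) > 0" using \<sigma>_pos by simp_all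
      then show ?thesis by (simp add: n fact_Suc field_simps)
    qed
    also have "(2 * (k + 1)) / ((2 / \<sigma>\<^sup>2) * (k + 1)) = \<sigma>\<^sup>2"
      using \<sigma>_pos by (simp add: field_simps)
    finally show ?thesis .
  qed
  ultimately show ?thesis by (simp only: integral_centered_normal_power_even)
qed

lemma integrable_centered_normal_of_real_power:
  "integrable (centered_normal \<sigma>) (\<lambda>t. (of_real t :: complex) ^ n)"
  using integrable_of_real[OF integrable_centered_normal_power, of n] by simp

lemma integral_centered_normal_of_real_power:
  "(\<integral>t. (of_real t :: complex) ^ n \<partial>centered_normal \<sigma>) = of_real (\<integral>t. t ^ n \<partial>centered_normal \<sigma>)"
  using integral_complex_of_real[of "centered_normal \<sigma>" "\<lambda>t. t ^ n"] by simp

lemma integrable_centered_normal_poly: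
  "integrable (centered_normal \<sigma>) (\<lambda>t. poly (P :: complex poly) (of_real t))"
  unfolding poly_altdef
  by (intro Bochner_Integration.integrable_sum integrable_mult_right
      integrable_centered_normal_of_real_power)

lemma integral_centered_normal_mult_monom:
  fixes c :: complex
  shows "(\<integral>t. of_real t * poly (monom c n) (of_real t) \<partial>centered_normal \<sigma>)
    = \<sigma>\<^sup>2 * (\<integral>t. poly (pderiv (monom c n)) (of_real t) \<partial>centered_normal \<sigma>)"
proof -
  have "(\<lambda>t. of_real t * poly (monom c n) (of_real t)) = (\<lambda>t. c * (of_real t :: complex) ^ Suc n)"
    by (simp add: poly_monom fun_eq_iff)
  then have "(\<integral>t. of_real t * poly (monom c n) (of_real t) \<partial>centered_normal \<sigma>)
      = c * of_real (\<integral>t. t ^ Suc n \<partial>centered_normal \<sigma>)"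
    by (simp only: integral_mult_right_zero integral_centered_normal_of_real_power)
  also have "\<dots> = \<sigma>\<^sup>2 * (of_nat n * c * of_real (\<integral>t. t ^ (n - 1) \<partial>centered_normal \<sigma>))"
    by (simp only: integral_centered_normal_power_Suc) (simp add: field_simps)
  also have "\<dots> = \<sigma>\<^sup>2 * (\<integral>t. poly (pderiv (monom c n)) (of_real t) \<partial>centered_normal \<sigma>)"
    by (simp add: pderiv_monom poly_monom integral_centered_normal_of_real_power)
  finally show ?thesis .
qed

lemma integral_centered_normal_mult_poly:
  fixes P :: "complex poly"
  shows "(\<integral>t. of_real t * poly P (of_real t) \<partial>centered_normal \<sigma>)
       = \<sigma>\<^sup>2 * (\<integral>t. poly (pderiv P) (of_real t) \<partial>centered_normal \<sigma>)"
proof -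
  have integrable_mult_poly: "integrable (centered_normal \<sigma>) (\<lambda>t. of_real t * poly Q (of_real t))"
    for Q :: "complex poly"
    using integrable_centered_normal_poly[of "pCons 0 Q"] by simp
  have "(\<integral>t. of_real t * poly (\<Sum>i\<in>A. monom (coeff P i) i) (of_real t) \<partial>centered_normal \<sigma>)
      = \<sigma>\<^sup>2 * (\<integral>t. poly (pderiv (\<Sum>i\<in>A. monom (coeff P i) i)) (of_real t) \<partial>centered_normal \<sigma>)"
    if "finite A" for A
    using that
  proof (induction A rule: finite_induct)
    case (insert i A)
    let ?Q = "\<Sum>i\<in>A. monom (coeff P i) i"
    have "(\<integral>t. of_real t * poly (monom (coeff P i) i + ?Q) (of_real t) \<partial>centered_normal \<sigma>)
        = (\<integral>t. of_real t * poly (monom (coeff P i) i) (of_real t) \<partial>centered_normal \<sigma>)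
          + (\<integral>t. of_real t * poly ?Q (of_real t) \<partial>centered_normal \<sigma>)"
      unfolding poly_add distrib_left
      by (intro Bochner_Integration.integral_add integrable_mult_poly)
    moreover have "(\<integral>t. poly (pderiv (monom (coeff P i) i + ?Q)) (of_real t) \<partial>centered_normal \<sigma>)
        = (\<integral>t. poly (pderiv (monom (coeff P i) i)) (of_real t) \<partial>centered_normal \<sigma>)
          + (\<integral>t. poly (pderiv ?Q) (of_real t) \<partial>centered_normal \<sigma>)"
      unfolding pderiv_add poly_add
      by (intro Bochner_Integration.integral_add integrable_centered_normal_poly)
    moreover have "(\<Sum>i\<in>insert i A. monom (coeff P i) i) = monom (coeff P i) i + ?Q"
      using insert.hyps by simp
    ultimately show ?case
      using insert.IH integral_centered_normal_mult_monom[of "coeff P i" i]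
      by (simp only: distrib_left)
  qed (simp add: pderiv_0)
  from this[OF finite_atMost[of "degree P"]] show ?thesis
    by (simp only: poly_as_sum_of_monoms)
qed

end

abbreviation cn_marginal :: "real measure" where
  "cn_marginal \<equiv> centered_normal (sqrt (1/2))"

interpretation cn_marginal: prob_space cn_marginal
  by (rule prob_space_centered_normal) simp

interpretation cn_pair: pair_prob_space cn_marginal cn_marginal ..

lemma integral_cn_marginal_mult_poly:
  fixes P :: "complex poly"
  shows "(\<integral>t. of_real t * poly P (of_real t) \<partial>cn_marginal)
       = 1/2 * (\<integral>t. poly (pderiv P) (of_real t) \<partial>cn_marginal)"
  using integral_centered_normal_mult_poly[of "sqrt (1/2)" P] by simp

lemma measurable_Complex_pair [measurable]:
  "(\<lambda>(a, b). Complex a b) \<in> borel_measurable (cn_marginal \<Otimes>\<^sub>M cn_marginal)"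
proof -
  have "(\<lambda>(a, b). Complex a b) = (\<lambda>p. complex_of_real (fst p) + \<i> * complex_of_real (snd p))"
    by (auto simp: fun_eq_iff complex_eq_iff)
  then show ?thesis by simp
qed

lemma std_complex_normal_eq_distr_pair:
  "std_complex_normal = distr (cn_marginal \<Otimes>\<^sub>M cn_marginal) borel (\<lambda>(a, b). Complex a b)"
  unfolding std_complex_normal_def centered_normal_def ..

lemma prob_space_std_complex_normal: "prob_space std_complex_normal"
  unfolding std_complex_normal_eq_distr_pair by (intro cn_pair.prob_space_distr) simp

lemma sets_std_complex_normal [measurable_cong, simp]: "sets std_complex_normal = sets borel"
  by (simp add: std_complex_normal_eq_distr_pair)

lemma space_std_complex_normal [simp]: "space std_complex_normal = UNIV"
  by (simp add: std_complex_normal_eq_distr_pair)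

lemma integrable_std_complex_normal_iff:
  fixes f :: "complex \<Rightarrow> 'b::{banach, second_countable_topology}"
  assumes [measurable]: "f \<in> borel_measurable borel"
  shows "integrable std_complex_normal f
     \<longleftrightarrow> integrable (cn_marginal \<Otimes>\<^sub>M cn_marginal) (\<lambda>(a, b). f (Complex a b))"
  unfolding std_complex_normal_eq_distr_pair
  by (subst integrable_distr_eq) (auto simp: case_prod_beta')

lemma integral_std_complex_normal:
  fixes f :: "complex \<Rightarrow> 'b::{banach, second_countable_topology}"
  assumes [measurable]: "f \<in> borel_measurable borel"
  shows "integral\<^sup>L std_complex_normal f
     = integral\<^sup>L (cn_marginal \<Otimes>\<^sub>M cn_marginal) (\<lambda>(a, b). f (Complex a b))"
  unfolding std_complex_normal_eq_distr_pair by (subst integral_distr) (auto simp: case_prod_beta')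

lemma integral_std_complex_normal_Re_inner:
  fixes f :: "complex \<Rightarrow> 'b::{banach, second_countable_topology}"
  assumes "integrable std_complex_normal f"
  shows "integral\<^sup>L std_complex_normal f
     = (\<integral>b. (\<integral>a. f (Complex a b) \<partial>cn_marginal) \<partial>cn_marginal)"
proof -
  have [measurable]: "f \<in> borel_measurable borel"
    using borel_measurable_integrable[OF assms] by simp
  show ?thesis
    using assms cn_pair.integral_snd[of "\<lambda>a b. f (Complex a b)"]
    by (simp add: integral_std_complex_normal integrable_std_complex_normal_iff)
qed

lemma integral_std_complex_normal_Im_inner:
  fixes f :: "complex \<Rightarrow> 'b::{banach, second_countable_topology}"
  assumes "integrable std_complex_normal f"
  shows "integral\<^sup>L std_complex_normal f
     = (\<integral>a. (\<integral>b. f (Complex a b) \<partial>cn_marginal) \<partial>cn_marginal)"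
proof -
  have [measurable]: "f \<in> borel_measurable borel"
    using borel_measurable_integrable[OF assms] by simp
  show ?thesis
    using assms cn_pair.integral_fst[of "\<lambda>a b. f (Complex a b)"]
    by (simp add: integral_std_complex_normal integrable_std_complex_normal_iff)
qed

lemma integrable_cn_pair_fst:
  fixes g :: "real \<Rightarrow> 'b::{banach, second_countable_topology}"
  assumes "integrable cn_marginal g"
  shows "integrable (cn_marginal \<Otimes>\<^sub>M cn_marginal) (\<lambda>p. g (fst p))"
  using assms cn_marginal.distr_pair_fst[of cn_marginal]
  by (subst integrable_distr_eq[symmetric]) auto

lemma integrable_cn_pair_snd:
  fixes g :: "real \<Rightarrow> 'b::{banach, second_countable_topology}"
  assumes "integrable cn_marginal g"
  shows "integrable (cn_marginal \<Otimes>\<^sub>M cn_marginal) (\<lambda>p. g (snd p))"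
  using cn_pair.integrable_product_swap[OF integrable_cn_pair_fst[OF assms]]
  by (simp add: case_prod_beta')

lemma integrable_std_complex_normal_polynomial_growth:
  fixes f :: "complex \<Rightarrow> 'b::{banach, second_countable_topology}"
  assumes [measurable]: "f \<in> borel_measurable borel"
    and growth: "\<And>z. norm (f z) \<le> C * (1 + cmod z) ^ N"
  shows "integrable std_complex_normal f"
proof -
  let ?g = "\<lambda>p. C * ((1 + \<bar>fst p\<bar>) ^ (2 * N) + (1 + \<bar>snd p\<bar>) ^ (2 * N))"
  have "integrable cn_marginal (\<lambda>t. (1 + \<bar>t\<bar>) ^ k)" for k
    unfolding binomial_ring
    by (intro Bochner_Integration.integrable_sum integrable_mult_right integrable_mult_left
        integrable_centered_normal_abs_power) simp
  then have dominant: "integrable (cn_marginal \<Otimes>\<^sub>M cn_marginal) ?g"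
    by (intro integrable_mult_right Bochner_Integration.integrable_add
        integrable_cn_pair_fst integrable_cn_pair_snd)
  have product_le: "X * Y \<le> X\<^sup>2 + Y\<^sup>2" if "0 \<le> X" "0 \<le> Y" for X Y :: real
    using sum_squares_bound[of X Y] mult_nonneg_nonneg[OF that] by linarith
  have C: "0 \<le> C" using order_trans[OF norm_ge_zero growth[of 0]] by simp
  have bound: "norm (f (Complex a b)) \<le> ?g (a, b)" for a b
  proof -
    have "1 + cmod (Complex a b) \<le> (1 + \<bar>a\<bar>) * (1 + \<bar>b\<bar>)"
      using cmod_le[of "Complex a b"] mult_nonneg_nonneg[OF abs_ge_zero abs_ge_zero, of a b]
      by (simp add: ring_distribs del: mult_nonneg_nonneg)
    then have "(1 + cmod (Complex a b)) ^ N \<le> (1 + \<bar>a\<bar>) ^ N * (1 + \<bar>b\<bar>) ^ N"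
      by (metis power_mono power_mult_distrib add_nonneg_nonneg norm_ge_zero zero_le_one)
    also have "\<dots> \<le> ((1 + \<bar>a\<bar>) ^ N)\<^sup>2 + ((1 + \<bar>b\<bar>) ^ N)\<^sup>2"
      by (intro product_le) simp_all
    finally show ?thesis
      using growth[of "Complex a b"] C
      by (simp add: power_mult[symmetric] mult.commute order_trans[OF _ mult_left_mono])
  qed
  have "integrable (cn_marginal \<Otimes>\<^sub>M cn_marginal) (\<lambda>(a, b). f (Complex a b))"
    by (rule Bochner_Integration.integrable_bound[OF dominant])
      (use order_trans[OF bound abs_ge_self] in \<open>auto simp: case_prod_beta intro!: AE_I2\<close>)
  then show ?thesis by (simp add: integrable_std_complex_normal_iff)
qed

lemma norm_poly_le:
  fixes P :: "'a::real_normed_field poly"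
  shows "norm (poly P z) \<le> (\<Sum>i\<le>degree P. norm (coeff P i)) * (1 + norm z) ^ degree P"
proof -
  have "norm (poly P z) \<le> (\<Sum>i\<le>degree P. norm (coeff P i) * norm z ^ i)"
    unfolding poly_altdef by (rule order_trans[OF norm_sum]) (simp add: norm_mult norm_power)
  also have "\<dots> \<le> (\<Sum>i\<le>degree P. norm (coeff P i) * (1 + norm z) ^ degree P)"
    by (intro sum_mono mult_left_mono order_trans[OF power_mono power_increasing]) auto
  finally show ?thesis by (simp add: sum_distrib_right)
qed

lemma borel_measurable_poly [measurable]: "poly (P :: complex poly) \<in> borel_measurable borel"
  by (intro borel_measurable_continuous_onI continuous_intros)

lemma borel_measurable_cnj [measurable]: "cnj \<in> borel_measurable borel"
  by (intro borel_measurable_continuous_onI continuous_intros)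

lemma integrable_std_complex_normal_mult_poly_cnj:
  fixes P Q :: "complex poly"
  assumes [measurable]: "g \<in> borel_measurable borel"
    and g: "\<And>z. cmod (g z) \<le> (1 + cmod z) ^ k"
  shows "integrable std_complex_normal (\<lambda>z. g z * (poly P z * poly Q (cnj z)))"
proof (rule integrable_std_complex_normal_polynomial_growth)
  let ?c = "\<lambda>R :: complex poly. \<Sum>i\<le>degree R. cmod (coeff R i)"
  fix z
  have "cmod (g z * (poly P z * poly Q (cnj z)))
      \<le> (1 + cmod z) ^ k * ((?c P * (1 + cmod z) ^ degree P) * (?c Q * (1 + cmod z) ^ degree Q))"
    unfolding norm_mult
    using norm_poly_le[of P z] norm_poly_le[of Q "cnj z"]
    by (intro mult_mono g) (auto intro!: sum_nonneg mult_nonneg_nonneg)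
  then show "cmod (g z * (poly P z * poly Q (cnj z)))
      \<le> ?c P * ?c Q * (1 + cmod z) ^ (k + degree P + degree Q)"
    by (simp add: power_add algebra_simps)
qed measurable

lemma integrable_std_complex_normal_poly_cnj [simp]:
  fixes P Q :: "complex poly"
  shows "integrable std_complex_normal (\<lambda>z. poly P z * poly Q (cnj z))"
  using integrable_std_complex_normal_mult_poly_cnj[of "\<lambda>_. 1" 0 P Q] by simp

lemma integral_std_complex_normal_Re_mult_poly_cnj:
  fixes P Q :: "complex poly"
  shows "(\<integral>z. of_real (Re z) * (poly P z * poly Q (cnj z)) \<partial>std_complex_normal)
    = 1/2 * (\<integral>z. poly (pderiv P) z * poly Q (cnj z) + poly P z * poly (pderiv Q) (cnj z)
              \<partial>std_complex_normal)"
proof -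
  let ?R = "\<lambda>b. pcompose P [:\<i> * of_real b, 1:] * pcompose Q [:- \<i> * of_real b, 1:]"
  let ?D = "\<lambda>z. poly (pderiv P) z * poly Q (cnj z) + poly P z * poly (pderiv Q) (cnj z)"
  have R: "poly P (Complex a b) * poly Q (cnj (Complex a b)) = poly (?R b) (of_real a)"
    and dR: "poly (pderiv (?R b)) (of_real a) = ?D (Complex a b)" for a b
    by (simp_all add: poly_pcompose pderiv_mult pderiv_pcompose pderiv_pCons Complex_eq algebra_simps)
  have "(\<integral>z. of_real (Re z) * (poly P z * poly Q (cnj z)) \<partial>std_complex_normal)
      = (\<integral>b. (\<integral>a. of_real a * poly (?R b) (of_real a) \<partial>cn_marginal) \<partial>cn_marginal)"
    by (subst integral_std_complex_normal_Re_inner)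
      (auto simp: R abs_Re_le_cmod add_increasing
        intro!: integrable_std_complex_normal_mult_poly_cnj[where k=1])
  also have "\<dots> = (\<integral>b. 1/2 * (\<integral>a. ?D (Complex a b) \<partial>cn_marginal) \<partial>cn_marginal)"
    by (intro Bochner_Integration.integral_cong refl) (simp only: integral_cn_marginal_mult_poly dR)
  also have "\<dots> = 1/2 * integral\<^sup>L std_complex_normal ?D"
    by (subst integral_std_complex_normal_Re_inner) (auto intro!: Bochner_Integration.integrable_add)
  finally show ?thesis .
qed

lemma integral_std_complex_normal_Im_mult_poly_cnj:
  fixes P Q :: "complex poly"
  shows "(\<integral>z. of_real (Im z) * (poly P z * poly Q (cnj z)) \<partial>std_complex_normal)
    = \<i>/2 * (\<integral>z. poly (pderiv P) z * poly Q (cnj z) - poly P z * poly (pderiv Q) (cnj z)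
              \<partial>std_complex_normal)"
proof -
  let ?R = "\<lambda>a. pcompose P [:of_real a, \<i>:] * pcompose Q [:of_real a, - \<i>:]"
  let ?D = "\<lambda>z. poly (pderiv P) z * poly Q (cnj z) - poly P z * poly (pderiv Q) (cnj z)"
  have R: "poly P (Complex a b) * poly Q (cnj (Complex a b)) = poly (?R a) (of_real b)"
    and dR: "poly (pderiv (?R a)) (of_real b) = \<i> * ?D (Complex a b)" for a b
    by (simp_all add: poly_pcompose pderiv_mult pderiv_pcompose pderiv_pCons Complex_eq algebra_simps)
  have "(\<integral>z. of_real (Im z) * (poly P z * poly Q (cnj z)) \<partial>std_complex_normal)
      = (\<integral>a. (\<integral>b. of_real b * poly (?R a) (of_real b) \<partial>cn_marginal) \<partial>cn_marginal)"
    by (subst integral_std_complex_normal_Im_inner)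
      (auto simp: R abs_Im_le_cmod add_increasing
        intro!: integrable_std_complex_normal_mult_poly_cnj[where k=1])
  also have "\<dots> = (\<integral>a. \<i>/2 * (\<integral>b. ?D (Complex a b) \<partial>cn_marginal) \<partial>cn_marginal)"
    by (intro Bochner_Integration.integral_cong refl)
      (simp only: integral_cn_marginal_mult_poly dR integral_mult_right_zero, simp)
  also have "\<dots> = \<i>/2 * integral\<^sup>L std_complex_normal ?D"
    by (subst integral_std_complex_normal_Im_inner) (auto intro!: Bochner_Integration.integrable_diff)
  finally show ?thesis .
qed

text \<open>Complex Gaussian integration by parts: \<open>E[z h(z)] = E[\<partial>h/\<partial>z\<^sup>*]\<close>.\<close>
lemma integral_std_complex_normal_mult_poly_cnj:
  fixes P Q :: "complex poly"
  shows "(\<integral>z. z * (poly P z * poly Q (cnj z)) \<partial>std_complex_normal)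
       = (\<integral>z. poly P z * poly (pderiv Q) (cnj z) \<partial>std_complex_normal)"
proof -
  let ?h = "\<lambda>z. poly P z * poly Q (cnj z)"
  let ?E1 = "\<integral>z. poly (pderiv P) z * poly Q (cnj z) \<partial>std_complex_normal"
  let ?E2 = "\<integral>z. poly P z * poly (pderiv Q) (cnj z) \<partial>std_complex_normal"
  have Re: "integrable std_complex_normal (\<lambda>z. of_real (Re z) * ?h z)"
    and Im: "integrable std_complex_normal (\<lambda>z. of_real (Im z) * ?h z)"
    by (auto simp: abs_Re_le_cmod abs_Im_le_cmod add_increasing
        intro!: integrable_std_complex_normal_mult_poly_cnj[where k=1])
  have "z * ?h z = of_real (Re z) * ?h z + \<i> * (of_real (Im z) * ?h z)" for z
    by (subst complex_eq) (simp add: algebra_simps)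
  then have "(\<integral>z. z * ?h z \<partial>std_complex_normal)
      = (\<integral>z. of_real (Re z) * ?h z \<partial>std_complex_normal)
        + \<i> * (\<integral>z. of_real (Im z) * ?h z \<partial>std_complex_normal)"
    by (simp only: Bochner_Integration.integral_add[OF Re integrable_mult_right[OF Im]]
        integral_mult_right_zero)
  also have "\<dots> = 1/2 * (?E1 + ?E2) + \<i> * (\<i>/2 * (?E1 - ?E2))"
    by (simp add: integral_std_complex_normal_Re_mult_poly_cnj
        integral_std_complex_normal_Im_mult_poly_cnj)
  also have "\<dots> = ?E2"
    by (simp add: algebra_simps)
  finally show ?thesis .
qed

section \<open>Mixed moments of complex Gaussian vectors\<close>

abbreviation std_complex_normal_vec :: "('d::finite \<Rightarrow> complex) measure" where
  "std_complex_normal_vec \<equiv> PiM UNIV (\<lambda>_. std_complex_normal)"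

interpretation std_complex_normal_product: product_sigma_finite "\<lambda>_. std_complex_normal"
  by (simp add: product_sigma_finite_def prob_space_std_complex_normal prob_space_imp_sigma_finite)

lemma prob_space_std_complex_normal_vec: "prob_space std_complex_normal_vec"
  by (intro prob_space_PiM prob_space_std_complex_normal)

lemma one_add_sum_le_prod_one_add:
  fixes t :: "'a \<Rightarrow> 'b::linordered_semidom"
  assumes "\<And>i. i \<in> I \<Longrightarrow> 0 \<le> t i"
  shows "1 + (\<Sum>i\<in>I. t i) \<le> (\<Prod>i\<in>I. 1 + t i)"
  using assms
proof (induction I rule: infinite_finite_induct)
  case (insert i I)
  have "1 \<le> (\<Prod>i\<in>I. 1 + t i)"
    using insert by (intro prod_ge_1) (auto intro: add_increasing2)
  then have "t i \<le> t i * (\<Prod>i\<in>I. 1 + t i)"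
    using insert.prems mult_left_mono[of 1 _ "t i"] by simp
  moreover have "1 + (\<Sum>i\<in>I. t i) \<le> (\<Prod>i\<in>I. 1 + t i)"
    using insert by simp
  ultimately show ?case
    using insert.hyps add_mono by (fastforce simp: algebra_simps)
qed simp_all

lemma integrable_std_complex_normal_vec_polynomial_growth:
  fixes f :: "('d::finite \<Rightarrow> complex) \<Rightarrow> 'b::{banach, second_countable_topology}"
  assumes [measurable]: "f \<in> borel_measurable (PiM UNIV (\<lambda>_. borel))"
    and growth: "\<And>v. norm (f v) \<le> C * (1 + (\<Sum>j\<in>UNIV. cmod (v j))) ^ N"
  shows "integrable std_complex_normal_vec f"
proof (rule Bochner_Integration.integrable_bound)
  show "integrable std_complex_normal_vec (\<lambda>v::'d \<Rightarrow> complex. C * (\<Prod>j\<in>UNIV. (1 + cmod (v j)) ^ N))"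
    by (intro integrable_mult_right std_complex_normal_product.product_integrable_prod)
      (auto intro!: integrable_std_complex_normal_polynomial_growth[where C=1 and N=N])
  have C: "0 \<le> C" using order_trans[OF norm_ge_zero growth[of "\<lambda>_. 0"]] by simp
  show "AE v in std_complex_normal_vec. norm (f v) \<le> norm (C * (\<Prod>j\<in>UNIV. (1 + cmod (v j)) ^ N))"
  proof (intro AE_I2)
    fix v :: "'d \<Rightarrow> complex"
    have "(1 + (\<Sum>j\<in>UNIV. cmod (v j))) ^ N \<le> (\<Prod>j\<in>UNIV. 1 + cmod (v j)) ^ N"
      by (intro power_mono one_add_sum_le_prod_one_add) (auto intro!: add_nonneg_nonneg sum_nonneg)
    then show "norm (f v) \<le> norm (C * (\<Prod>j\<in>UNIV. (1 + cmod (v j)) ^ N))"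
      using growth[of v] C
      by (simp add: prod_power_distrib abs_mult prod_nonneg order_trans[OF _ mult_left_mono])
  qed
qed simp

definition mixed_monomial ::
    "real ^ 'd::finite \<Rightarrow> real ^ 'd \<Rightarrow> nat \<Rightarrow> nat \<Rightarrow> nat \<Rightarrow> nat \<Rightarrow> ('d \<Rightarrow> complex) \<Rightarrow> complex" where
  "mixed_monomial x y p q r w v =
     rc_dot x v ^ p * cnj (rc_dot x v) ^ q * rc_dot y v ^ r * cnj (rc_dot y v) ^ w"

definition mixed_moment ::
    "real ^ 'd::finite \<Rightarrow> real ^ 'd \<Rightarrow> nat \<Rightarrow> nat \<Rightarrow> nat \<Rightarrow> nat \<Rightarrow> complex" where
  "mixed_moment x y p q r w = integral\<^sup>L std_complex_normal_vec (mixed_monomial x y p q r w)"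

lemma borel_measurable_rc_dot [measurable]:
  "rc_dot x \<in> borel_measurable (PiM UNIV (\<lambda>_::'d::finite. borel))"
  unfolding rc_dot_def by measurable

lemma borel_measurable_mixed_monomial [measurable]:
  "mixed_monomial x y p q r w \<in> borel_measurable (PiM UNIV (\<lambda>_::'d::finite. borel))"
  unfolding mixed_monomial_def by measurable

lemma norm_rc_dot_le:
  fixes x :: "real ^ 'd::finite"
  shows "cmod (rc_dot x v) \<le> (\<Sum>j\<in>UNIV. \<bar>x $ j\<bar>) * (1 + (\<Sum>j\<in>UNIV. cmod (v j)))"
proof -
  have "cmod (rc_dot x v) \<le> (\<Sum>j\<in>UNIV. \<bar>x $ j\<bar> * cmod (v j))"
    unfolding rc_dot_def by (rule order_trans[OF norm_sum]) (simp add: norm_mult)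
  also have "\<dots> \<le> (\<Sum>j\<in>UNIV. \<bar>x $ j\<bar>) * (\<Sum>j\<in>UNIV. cmod (v j))"
    unfolding sum_product
    by (intro sum_mono member_le_sum[of _ UNIV "\<lambda>k. \<bar>x $ j\<bar> * cmod (v k)" for j]) auto
  also have "\<dots> \<le> (\<Sum>j\<in>UNIV. \<bar>x $ j\<bar>) * (1 + (\<Sum>j\<in>UNIV. cmod (v j)))"
    by (intro mult_left_mono) (auto intro: sum_nonneg)
  finally show ?thesis .
qed

lemma integrable_mult_mixed_monomial:
  fixes x y :: "real ^ 'd::finite"
  assumes [measurable]: "g \<in> borel_measurable (PiM UNIV (\<lambda>_. borel))"
    and g: "\<And>v. cmod (g v) \<le> (1 + (\<Sum>j\<in>UNIV. cmod (v j))) ^ k"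
  shows "integrable std_complex_normal_vec (\<lambda>v. g v * mixed_monomial x y p q r w v)"
proof (rule integrable_std_complex_normal_vec_polynomial_growth)
  let ?n = "p + q + r + w"
  define K where "K = 1 + (\<Sum>j\<in>UNIV. \<bar>x $ j\<bar>) + (\<Sum>j\<in>UNIV. \<bar>y $ j\<bar>)"
  fix v :: "'d \<Rightarrow> complex"
  define S where "S = 1 + (\<Sum>j\<in>UNIV. cmod (v j))"
  have S: "0 \<le> S" by (auto simp: S_def intro!: add_nonneg_nonneg sum_nonneg)
  have K0: "0 \<le> K" by (auto simp: K_def intro!: add_nonneg_nonneg sum_nonneg)
  have K: "(\<Sum>j\<in>UNIV. \<bar>z $ j\<bar>) \<le> K" if "z = x \<or> z = y" for z :: "real ^ 'd"
    using that by (auto simp: K_def intro!: sum_nonneg)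
  have xy: "cmod (rc_dot x v) \<le> K * S" "cmod (rc_dot y v) \<le> K * S"
    unfolding S_def by (rule order_trans[OF norm_rc_dot_le mult_right_mono[OF K]];
        auto intro!: add_nonneg_nonneg sum_nonneg)+
  have "cmod (g v * mixed_monomial x y p q r w v)
      \<le> S ^ k * ((K * S) ^ p * (K * S) ^ q * (K * S) ^ r * (K * S) ^ w)"
    unfolding mixed_monomial_def norm_mult norm_power complex_mod_cnj
    by (intro mult_mono power_mono xy g[of v, folded S_def]) (auto simp: S K0)
  also have "\<dots> = K ^ ?n * S ^ (k + ?n)"
    by (simp only: power_add power_mult_distrib mult_ac)
  finally show "cmod (g v * mixed_monomial x y p q r w v)
      \<le> K ^ ?n * (1 + (\<Sum>j\<in>UNIV. cmod (v j))) ^ (k + ?n)"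
    unfolding S_def .
qed measurable

lemma integrable_mixed_monomial:
  "integrable std_complex_normal_vec (mixed_monomial x y p q r w)"
  using integrable_mult_mixed_monomial[of "\<lambda>_. 1" 0 x y p q r w] by simp

lemma integrable_coordinate_mult_mixed_monomial:
  fixes x y :: "real ^ 'd::finite" and j :: 'd
  shows "integrable std_complex_normal_vec (\<lambda>v. v j * mixed_monomial x y p q r w v)"
proof (rule integrable_mult_mixed_monomial[where k=1])
  fix v :: "'d \<Rightarrow> complex"
  show "cmod (v j) \<le> (1 + (\<Sum>j\<in>UNIV. cmod (v j))) ^ 1"
    using member_le_sum[of j UNIV "\<lambda>j. cmod (v j)"] by simp
qed measurable

lemma rc_dot_fun_upd: "rc_dot x (v(j := z)) = rc_dot x (v(j := 0)) + of_real (x $ j) * z"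
  unfolding rc_dot_def
  by (simp add: sum.remove[of UNIV j] sum.cong[of "UNIV - {j}" _ "\<lambda>k. of_real (x $ k) * (v(j := z)) k"])

lemma mixed_monomial_fun_upd:
  fixes x y :: "real ^ 'd::finite" and v :: "'d \<Rightarrow> complex" and j :: 'd
  defines "A \<equiv> rc_dot x (v(j := 0))" and "B \<equiv> rc_dot y (v(j := 0))"
  shows "mixed_monomial x y p q r w (v(j := z))
    = poly ([:A, of_real (x $ j):] ^ p * [:B, of_real (y $ j):] ^ r) z
      * poly ([:cnj A, of_real (x $ j):] ^ q * [:cnj B, of_real (y $ j):] ^ w) (cnj z)"
  unfolding mixed_monomial_def A_def B_def
  by (subst (1 2) rc_dot_fun_upd, subst (1 2) rc_dot_fun_upd) (simp add: algebra_simps)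

lemma integral_std_complex_normal_vec_fun_upd:
  fixes f :: "('d::finite \<Rightarrow> complex) \<Rightarrow> complex"
  assumes "integrable std_complex_normal_vec f"
  shows "integral\<^sup>L std_complex_normal_vec f
    = (\<integral>v. (\<integral>z. f (v(j := z)) \<partial>std_complex_normal) \<partial>PiM (UNIV - {j}) (\<lambda>_. std_complex_normal))"
  using std_complex_normal_product.product_integral_insert[of "UNIV - {j}" j f] assms
  by (simp add: insert_absorb)

lemma integral_std_complex_normal_mult_mixed_monomial_fun_upd:
  "(\<integral>z. z * mixed_monomial x y p q r w (v(j := z)) \<partial>std_complex_normal)
    = (\<integral>z. of_nat q * of_real (x $ j) * mixed_monomial x y p (q - 1) r w (v(j := z))
           + of_nat w * of_real (y $ j) * mixed_monomial x y p q r (w - 1) (v(j := z))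
         \<partial>std_complex_normal)"
  unfolding mixed_monomial_fun_upd integral_std_complex_normal_mult_poly_cnj
  by (intro Bochner_Integration.integral_cong refl)
    (simp add: pderiv_mult pderiv_power pderiv_pCons algebra_simps)

lemma integral_coordinate_mult_mixed_monomial:
  "(\<integral>v. v j * mixed_monomial x y p q r w v \<partial>std_complex_normal_vec)
    = of_nat q * of_real (x $ j) * mixed_moment x y p (q - 1) r w
      + of_nat w * of_real (y $ j) * mixed_moment x y p q r (w - 1)"
proof -
  let ?F = "\<lambda>v. of_nat q * of_real (x $ j) * mixed_monomial x y p (q - 1) r w v
                + of_nat w * of_real (y $ j) * mixed_monomial x y p q r (w - 1) v"
  have "(\<integral>v. v j * mixed_monomial x y p q r w v \<partial>std_complex_normal_vec)
      = (\<integral>v. (\<integral>z. z * mixed_monomial x y p q r w (v(j := z)) \<partial>std_complex_normal)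
            \<partial>PiM (UNIV - {j}) (\<lambda>_. std_complex_normal))"
    by (subst integral_std_complex_normal_vec_fun_upd[where j=j])
      (simp_all add: integrable_coordinate_mult_mixed_monomial)
  also have "\<dots> = (\<integral>v. (\<integral>z. ?F (v(j := z)) \<partial>std_complex_normal)
                     \<partial>PiM (UNIV - {j}) (\<lambda>_. std_complex_normal))"
    by (simp only: integral_std_complex_normal_mult_mixed_monomial_fun_upd)
  also have "\<dots> = integral\<^sup>L std_complex_normal_vec ?F"
    by (subst integral_std_complex_normal_vec_fun_upd[where j=j])
      (simp_all add: integrable_mixed_monomial)
  also have "\<dots> = of_nat q * of_real (x $ j) * mixed_moment x y p (q - 1) r w
      + of_nat w * of_real (y $ j) * mixed_moment x y p q r (w - 1)"
    by (simp add: mixed_moment_def integrable_mixed_monomial)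
  finally show ?thesis .
qed

lemma mixed_moment_Suc1:
  "mixed_moment x y (Suc p) q r w
    = of_nat q * of_real (x \<bullet> x) * mixed_moment x y p (q - 1) r w
      + of_nat w * of_real (x \<bullet> y) * mixed_moment x y p q r (w - 1)"
proof -
  have "mixed_monomial x y (Suc p) q r w
      = (\<lambda>v. \<Sum>j\<in>UNIV. of_real (x $ j) * (v j * mixed_monomial x y p q r w v))"
  proof
    fix v
    have "mixed_monomial x y (Suc p) q r w v = rc_dot x v * mixed_monomial x y p q r w v"
      by (simp add: mixed_monomial_def)
    then show "mixed_monomial x y (Suc p) q r w v
        = (\<Sum>j\<in>UNIV. of_real (x $ j) * (v j * mixed_monomial x y p q r w v))"
      unfolding rc_dot_def sum_distrib_right by (simp add: mult_ac)
  qed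
  then have "mixed_moment x y (Suc p) q r w
      = (\<Sum>j\<in>UNIV. of_real (x $ j) * (\<integral>v. v j * mixed_monomial x y p q r w v \<partial>std_complex_normal_vec))"
    unfolding mixed_moment_def
    by (simp add: integrable_coordinate_mult_mixed_monomial)
  also have "\<dots> = of_nat q * of_real (x \<bullet> x) * mixed_moment x y p (q - 1) r w
      + of_nat w * of_real (x \<bullet> y) * mixed_moment x y p q r (w - 1)"
    unfolding integral_coordinate_mult_mixed_monomial inner_vec_def
    by (simp add: sum.distrib sum_distrib_left sum_distrib_right algebra_simps)
  finally show ?thesis .
qed

lemma mixed_moment_swap: "mixed_moment x y p q r w = mixed_moment y x r w p q"
  unfolding mixed_moment_def mixed_monomial_def by (simp add: mult_ac)

lemma mixed_moment_Suc3:
  "mixed_moment x y p q (Suc r) w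
    = of_nat q * of_real (x \<bullet> y) * mixed_moment x y p (q - 1) r w
      + of_nat w * of_real (y \<bullet> y) * mixed_moment x y p q r (w - 1)"
  by (subst (1 2 3) mixed_moment_swap, subst mixed_moment_Suc1) (simp add: inner_commute algebra_simps)

lemma mixed_moment_0: "mixed_moment x y 0 0 0 0 = 1"
proof -
  have "mixed_monomial x y 0 0 0 0 = (\<lambda>_. 1)"
    by (simp add: mixed_monomial_def fun_eq_iff)
  then show ?thesis
    by (simp add: mixed_moment_def prob_space.prob_space[OF prob_space_std_complex_normal_vec])
qed

section \<open>Solving the moment recursion\<close>

definition falling_fact :: "nat \<Rightarrow> nat \<Rightarrow> complex" where
  "falling_fact w n = (\<Prod>i<n. of_nat w - of_nat i)"

lemma falling_fact_0[simp]: "falling_fact w 0 = 1" by (simp add: falling_fact_def)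

lemma falling_fact_Suc: "falling_fact w (Suc n) = of_nat w * falling_fact (w - 1) n"
proof -
  have "falling_fact w (Suc n) = (of_nat w - of_nat 0) * (\<Prod>i<n. of_nat w - of_nat (Suc i))"
    unfolding falling_fact_def by (rule prod.lessThan_Suc_shift)
  also have "(\<Prod>i<n. of_nat w - of_nat (Suc i) :: complex) = falling_fact (w - 1) n" if "w > 0"
    unfolding falling_fact_def using that by (intro prod.cong refl) (simp add: of_nat_diff)
  ultimately show ?thesis by (cases "w = 0") auto
qed

lemma falling_fact_mult_fact: "n \<le> w \<Longrightarrow> falling_fact w n * fact (w - n) = fact w"
proof (induction n arbitrary: w)
  case (Suc n)
  then obtain w' where w: "w = Suc w'" by (cases w) auto
  have "falling_fact w (Suc n) * fact (w - Suc n) = of_nat w * (falling_fact w' n * fact (w' - n))"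
    by (simp add: falling_fact_Suc w)
  also have "\<dots> = of_nat w * fact w'" using Suc.IH[of w'] Suc.prems w by simp
  also have "\<dots> = fact w" by (simp add: w fact_Suc)
  finally show ?case .
qed simp

text \<open>By Wick's formula, if \<open>p + r = q + w\<close> then \<open>E[a\<^sup>p (a\<^sup>*)\<^sup>q b\<^sup>r (b\<^sup>*)\<^sup>w]\<close> sums, over the matchings of
  the factors \<open>a, b\<close> with the factors \<open>a\<^sup>*, b\<^sup>*\<close>, the product of the pair weights: \<open>X\<close> for
  \<open>(a, a\<^sup>*)\<close>, \<open>c\<close> for \<open>(a, b\<^sup>*)\<close> and \<open>(b, a\<^sup>*)\<close>, \<open>Y\<close> for \<open>(b, b\<^sup>*)\<close>. \<open>wick_term\<close> collects the
  matchings with \<open>k\<close> pairs \<open>(a, a\<^sup>*)\<close>, divided by \<open>r!\<close>.\<close>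
definition wick_term :: "complex \<Rightarrow> complex \<Rightarrow> complex \<Rightarrow> nat \<Rightarrow> nat \<Rightarrow> nat \<Rightarrow> nat \<Rightarrow> complex" where
  "wick_term X Y c p q w k = of_nat (p choose k) * of_nat (q choose k) * fact k
      * falling_fact w (p - k) * X ^ k * c ^ ((p - k) + (q - k)) * Y ^ (w - (p - k))"

definition wick_sum :: "complex \<Rightarrow> complex \<Rightarrow> complex \<Rightarrow> nat \<Rightarrow> nat \<Rightarrow> nat \<Rightarrow> complex" where
  "wick_sum X Y c p q w = (\<Sum>k\<le>p. wick_term X Y c p q w k)"

lemma Suc_times_binomial_fact:
  "of_nat q * of_nat ((q - 1) choose k) * (fact k :: complex) = of_nat (q choose Suc k) * fact (Suc k)"
proof -
  have n: "q * ((q - 1) choose k) = (q choose Suc k) * Suc k"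
  proof (cases q)
    case (Suc q')
    then show ?thesis by (simp only: diff_Suc_1 Suc_times_binomial_eq)
  qed simp
  have "(of_nat q * of_nat ((q - 1) choose k) :: complex) = of_nat (q choose Suc k) * of_nat (Suc k)"
    by (metis n of_nat_mult)
  then have "of_nat q * of_nat ((q - 1) choose k) * (fact k :: complex)
      = of_nat (q choose Suc k) * (of_nat (Suc k) * fact k)"
    by (simp only: mult.assoc[symmetric])
  then show ?thesis unfolding fact_Suc .
qed

lemma wick_term_Suc_0:
  "wick_term X Y c (Suc p) q w 0 = of_nat w * c * wick_term X Y c p q (w - 1) 0"
proof -
  have e: "w - Suc p = w - 1 - p" by simp
  show ?thesis
    unfolding wick_term_def
    by (simp only: e binomial_n_0 fact_0 of_nat_1 mult_1 mult_1_right power_0 diff_zero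
        falling_fact_Suc add_Suc power_Suc mult_ac)
qed

lemma wick_term_Suc_top:
  "wick_term X Y c (Suc p) q w (Suc p) = of_nat q * X * wick_term X Y c p (q - 1) w p"
proof -
  have e: "q - Suc p = q - 1 - p" by simp
  have "wick_term X Y c (Suc p) q w (Suc p)
      = (of_nat q * of_nat ((q - 1) choose p) * fact p) * X ^ Suc p * c ^ (q - 1 - p) * Y ^ w"
    unfolding wick_term_def Suc_times_binomial_fact
    by (simp only: e binomial_n_n diff_self_eq_0 of_nat_1 mult_1 mult_1_right falling_fact_0 add_0
        diff_zero)
  also have "\<dots> = of_nat q * X * wick_term X Y c p (q - 1) w p"
    unfolding wick_term_def
    by (simp only: binomial_n_n diff_self_eq_0 of_nat_1 mult_1 mult_1_right falling_fact_0 add_0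
        diff_zero power_Suc mult_ac)
  finally show ?thesis .
qed

text \<open>Pascal's rule \<open>p+1 choose k+1 = p choose k + p choose k+1\<close> splits the term in two.\<close>
lemma wick_term_Suc_Suc:
  assumes "k < p"
  shows "wick_term X Y c (Suc p) q w (Suc k)
    = of_nat q * X * wick_term X Y c p (q - 1) w k + of_nat w * c * wick_term X Y c p q (w - 1) (Suc k)"
proof -
  have e1: "p - k = Suc (p - Suc k)" using assms by simp
  have e2: "q - 1 - k = q - Suc k" by simp
  define Q where "Q = of_nat (q choose Suc k) * fact (Suc k) * of_nat w
     * falling_fact (w - 1) (p - Suc k) * X ^ Suc k * c ^ (Suc (p - Suc k) + (q - Suc k)) * Y ^ (w - 1 - (p - Suc k))"
  have L: "wick_term X Y c (Suc p) q w (Suc k) = (of_nat (p choose k) + of_nat (p choose Suc k)) * Q"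
    unfolding wick_term_def Q_def diff_Suc_Suc e1 falling_fact_Suc binomial_Suc_Suc of_nat_add
    by (simp only: mult_ac diff_Suc_eq_diff_pred)
  have "of_nat q * X * wick_term X Y c p (q - 1) w k
      = of_nat (p choose k) * (of_nat q * of_nat ((q - 1) choose k) * fact k)
        * (of_nat w * falling_fact (w - 1) (p - Suc k)) * (X * X ^ k)
        * c ^ (Suc (p - Suc k) + (q - Suc k)) * Y ^ (w - 1 - (p - Suc k))"
    unfolding wick_term_def e1 e2 falling_fact_Suc by (simp only: mult_ac diff_Suc_eq_diff_pred)
  also have "\<dots> = of_nat (p choose k) * Q"
    unfolding Suc_times_binomial_fact Q_def by (simp only: mult_ac power_Suc)
  finally have A: "of_nat q * X * wick_term X Y c p (q - 1) w k = of_nat (p choose k) * Q" .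
  have B: "of_nat w * c * wick_term X Y c p q (w - 1) (Suc k) = of_nat (p choose Suc k) * Q"
    unfolding wick_term_def Q_def by (simp only: mult_ac power_Suc add_Suc)
  show ?thesis
    unfolding L A B by (simp add: algebra_simps)
qed

lemma wick_term_Suc:
  assumes "k \<le> Suc p"
  shows "wick_term X Y c (Suc p) q w k
    = (if k = 0 then 0 else of_nat q * X * wick_term X Y c p (q - 1) w (k - 1))
      + (if k \<le> p then of_nat w * c * wick_term X Y c p q (w - 1) k else 0)"
proof (cases k)
  case (Suc k')
  with assms consider "k' = p" | "k' < p" by linarith
  then show ?thesis
    by cases (simp_all add: Suc wick_term_Suc_top wick_term_Suc_Suc)
qed (simp add: wick_term_Suc_0)

lemma wick_sum_Suc:
  "wick_sum X Y c (Suc p) q w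
    = of_nat q * X * wick_sum X Y c p (q - 1) w + of_nat w * c * wick_sum X Y c p q (w - 1)"
proof -
  have "wick_sum X Y c (Suc p) q w
      = (\<Sum>k\<le>Suc p. (if k = 0 then 0 else of_nat q * X * wick_term X Y c p (q-1) w (k-1)))
      + (\<Sum>k\<le>Suc p. (if k \<le> p then of_nat w * c * wick_term X Y c p q (w-1) k else 0))"
    unfolding wick_sum_def sum.distrib[symmetric] by (intro sum.cong refl wick_term_Suc) simp
  also have "(\<Sum>k\<le>Suc p. (if k = 0 then 0 else of_nat q * X * wick_term X Y c p (q-1) w (k-1)))
      = of_nat q * X * wick_sum X Y c p (q-1) w"
    unfolding wick_sum_def by (subst sum.atMost_Suc_shift) (simp add: sum_distrib_left)
  also have "(\<Sum>k\<le>Suc p. (if k \<le> p then of_nat w * c * wick_term X Y c p q (w-1) k else 0))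
      = of_nat w * c * wick_sum X Y c p q (w-1)"
    unfolding wick_sum_def by (simp add: sum_distrib_left)
  finally show ?thesis .
qed

locale wick_recursion =
  fixes m :: "nat \<Rightarrow> nat \<Rightarrow> nat \<Rightarrow> nat \<Rightarrow> complex" and X Y c :: complex
  assumes Suc1: "\<And>p q r w.
      m (Suc p) q r w = of_nat q * X * m p (q - 1) r w + of_nat w * c * m p q r (w - 1)"
    and Suc3: "\<And>p q r w.
      m p q (Suc r) w = of_nat q * c * m p (q - 1) r w + of_nat w * Y * m p q r (w - 1)"
    and zero: "m 0 0 0 0 = 1"
begin

lemma closed_form_0: "q + w = r \<Longrightarrow> m 0 q r w = fact r * c ^ q * Y ^ w"
proof (induction r arbitrary: q w)
  case 0
  then show ?case using zero by simp
next
  case (Suc r)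
  have "m 0 q (Suc r) w = of_nat q * c * m 0 (q-1) r w + of_nat w * Y * m 0 q r (w-1)" by (rule Suc3)
  also have "of_nat q * c * m 0 (q-1) r w = of_nat q * (fact r * c ^ q * Y ^ w)"
  proof (cases q)
    case (Suc q')
    then show ?thesis using Suc.IH[of q' w] Suc.prems by simp
  qed simp
  also have "of_nat w * Y * m 0 q r (w-1) = of_nat w * (fact r * c ^ q * Y ^ w)"
  proof (cases w)
    case (Suc w')
    then show ?thesis using Suc.IH[of q w'] Suc.prems by simp
  qed simp
  also have "of_nat q * (fact r * c ^ q * Y ^ w) + of_nat w * (fact r * c ^ q * Y ^ w)
      = of_nat (q + w) * (fact r * c ^ q * Y ^ w)" by (simp add: algebra_simps)
  also have "\<dots> = fact (Suc r) * c ^ q * Y ^ w" using Suc.prems by (simp add: fact_Suc)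
  finally show ?case .
qed

lemma closed_form: "q + w = p + s \<Longrightarrow> m p q s w = fact s * wick_sum X Y c p q w"
proof (induction p arbitrary: q w)
  case 0
  have "wick_sum X Y c 0 q w = c ^ q * Y ^ w" unfolding wick_sum_def wick_term_def by simp
  then show ?case using closed_form_0[of q w s] 0 by simp
next
  case (Suc p)
  have "m (Suc p) q s w = of_nat q * X * m p (q-1) s w + of_nat w * c * m p q s (w-1)" by (rule Suc1)
  also have "of_nat q * X * m p (q-1) s w = of_nat q * X * (fact s * wick_sum X Y c p (q-1) w)"
  proof (cases q)
    case (Suc q')
    then show ?thesis using Suc.IH[of q' w] Suc.prems by simp
  qed simp
  also have "of_nat w * c * m p q s (w-1) = of_nat w * c * (fact s * wick_sum X Y c p q (w-1))"
  proof (cases w)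
    case (Suc w')
    then show ?thesis using Suc.IH[of q w'] Suc.prems by simp
  qed simp
  also have "of_nat q * X * (fact s * wick_sum X Y c p (q-1) w)
      + of_nat w * c * (fact s * wick_sum X Y c p q (w-1)) = fact s * wick_sum X Y c (Suc p) q w"
    unfolding wick_sum_Suc by (simp add: algebra_simps)
  finally show ?case .
qed

lemma diagonal: "m s s s s = (\<Sum>i\<le>s. (fact s)^2 * of_nat (s choose i)^2 * c^(2*i) * (X*Y)^(s-i))"
proof -
  have "m s s s s = fact s * wick_sum X Y c s s s" by (rule closed_form) simp
  also have "\<dots> = (\<Sum>k\<le>s. (fact s)^2 * of_nat (s choose k)^2 * c^(2*(s-k)) * (X*Y)^k)"
    unfolding wick_sum_def sum_distrib_left
  proof (intro sum.cong refl)
    fix k assume k: "k \<in> {..s}"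
    then have "fact k * falling_fact s (s - k) = fact s"
      using falling_fact_mult_fact[of "s-k" s] by (simp add: mult.commute)
    moreover have "s - (s - k) = k" "(s - k) + (s - k) = 2 * (s - k)" using k by auto
    ultimately show "fact s * wick_term X Y c s s s k
        = (fact s)^2 * of_nat (s choose k)^2 * c^(2*(s-k)) * (X*Y)^k"
      unfolding wick_term_def by (simp add: power2_eq_square power_mult_distrib algebra_simps)
  qed
  also have "\<dots> = (\<Sum>i\<le>s. (fact s)^2 * of_nat (s choose i)^2 * c^(2*i) * (X*Y)^(s-i))"
    by (rule sum.reindex_bij_witness[where i="\<lambda>i. s - i" and j="\<lambda>i. s - i"])
       (auto simp: binomial_symmetric[symmetric])
  finally show ?thesis .
qed

end

lemma wick_recursion_mixed_moment:
  "wick_recursion (mixed_moment x y) (of_real (x \<bullet> x)) (of_real (y \<bullet> y)) (of_real (x \<bullet> y))"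
  by unfold_locales (rule mixed_moment_Suc1 mixed_moment_Suc3 mixed_moment_0)+

definition feature_product :: "real ^ 'd::finite \<Rightarrow> real ^ 'd \<Rightarrow> nat \<Rightarrow> ('d \<Rightarrow> complex) \<Rightarrow> real" where
  "feature_product x y s v = cmod (rc_dot x v) ^ (2 * s) * cmod (rc_dot y v) ^ (2 * s)"

definition power_kernel :: "real ^ 'd::finite \<Rightarrow> real ^ 'd \<Rightarrow> nat \<Rightarrow> real" where
  "power_kernel x y s = (\<Sum>i\<le>s. (fact s)^2 * real (s choose i)^2 * (x \<bullet> y) ^ (2 * i)
                                   * (norm x * norm y) ^ (2 * (s - i)))"

lemma borel_measurable_feature_product [measurable]:
  "feature_product x y s \<in> borel_measurable (PiM UNIV (\<lambda>_::'d::finite. borel))"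
  unfolding feature_product_def by measurable

lemma of_real_feature_product: "of_real (feature_product x y s v) = mixed_monomial x y s s s s v"
proof -
  have "complex_of_real (cmod z ^ (2 * s)) = z ^ s * cnj z ^ s" for z :: complex
    by (simp only: power_mult of_real_power complex_mult_cnj[symmetric] cmod_power2 power_mult_distrib)
  then show ?thesis
    by (simp add: feature_product_def mixed_monomial_def mult_ac)
qed

lemma feature_product_squared: "(feature_product x y s v)\<^sup>2 = feature_product x y (2 * s) v"
  unfolding feature_product_def by (simp add: power2_eq_square power_add[symmetric] mult_ac)

lemma integrable_feature_product: "integrable std_complex_normal_vec (feature_product x y s)"
  using integrable_Re[OF integrable_mixed_monomial[of x y s s s s]]
  by (simp flip: of_real_feature_product)

lemma integral_feature_product:
  "integral\<^sup>L std_complex_normal_vec (feature_product x y s) = power_kernel x y s"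
proof -
  have "of_real (integral\<^sup>L std_complex_normal_vec (feature_product x y s)) = mixed_moment x y s s s s"
    by (simp add: mixed_moment_def of_real_feature_product flip: integral_complex_of_real)
  also have "\<dots> = of_real (power_kernel x y s)"
    by (simp add: wick_recursion.diagonal[OF wick_recursion_mixed_moment] power_kernel_def
        power_mult power_mult_distrib power2_norm_eq_inner)
  finally show ?thesis by (simp only: of_real_eq_iff)
qed

section \<open>A strong law for nonnegative uncorrelated variables\<close>

lemma mono_average_between_squares:
  fixes S :: "nat \<Rightarrow> real"
  assumes S: "mono S" "\<And>n. 0 \<le> S n" and m: "0 < m" "m\<^sup>2 \<le> n" "n < (Suc m)\<^sup>2"
  shows "S (m\<^sup>2) / real ((Suc m)\<^sup>2) \<le> S n / real n"
    and "S n / real n \<le> S ((Suc m)\<^sup>2) / real (m\<^sup>2)"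
proof -
  have m2: "0 < real (m\<^sup>2)" "real (m\<^sup>2) \<le> real n" "real n \<le> real ((Suc m)\<^sup>2)"
    using m by (simp_all only: of_nat_le_iff of_nat_0_less_iff zero_less_power less_imp_le)
  then have n: "0 < real n" by linarith
  have "S (m\<^sup>2) / real ((Suc m)\<^sup>2) \<le> S (m\<^sup>2) / real n"
    by (rule divide_left_mono) (use m2 n S(2) in \<open>simp_all del: of_nat_power\<close>)
  also have "\<dots> \<le> S n / real n"
    using n m(2) by (intro divide_right_mono monoD[OF S(1)]) simp_all
  finally show "S (m\<^sup>2) / real ((Suc m)\<^sup>2) \<le> S n / real n" .
  have "S n / real n \<le> S ((Suc m)\<^sup>2) / real n"
    using n m(3) by (intro divide_right_mono monoD[OF S(1)]) simp_all
  also have "\<dots> \<le> S ((Suc m)\<^sup>2) / real (m\<^sup>2)"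
    by (rule divide_left_mono) (use m2 n S(2) in \<open>simp_all del: of_nat_power\<close>)
  finally show "S n / real n \<le> S ((Suc m)\<^sup>2) / real (m\<^sup>2)" .
qed

lemma filterlim_floor_sqrt_at_top: "filterlim floor_sqrt at_top at_top"
  unfolding filterlim_at_top
  by (auto intro!: eventually_sequentiallyI le_floor_sqrtI)

text \<open>For nonnegative terms the partial sums are monotone, so each average is squeezed
  between the averages at the neighbouring squares.\<close>
lemma tendsto_average_of_tendsto_square_averages:
  fixes a :: "nat \<Rightarrow> real"
  assumes nonneg: "\<And>k. 0 \<le> a k"
    and squares: "(\<lambda>m. (\<Sum>k<(Suc m)\<^sup>2. a k) / real ((Suc m)\<^sup>2)) \<longlonglongrightarrow> \<mu>"
  shows "(\<lambda>n. (\<Sum>k<n. a k) / real n) \<longlonglongrightarrow> \<mu>"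
proof -
  define S where "S n = (\<Sum>k<n. a k)" for n
  have S: "mono S" "0 \<le> S n" for n
    unfolding S_def mono_def using nonneg by (auto intro!: sum_mono2 sum_nonneg)
  define T where "T m = S (m\<^sup>2) / real (m\<^sup>2)" for m
  have T: "T \<longlonglongrightarrow> \<mu>"
    using squares filterlim_sequentially_Suc[of T] unfolding T_def[abs_def] S_def by simp
  define Lo where "Lo m = T m * (real m / Suc m)\<^sup>2" for m
  define Up where "Up m = T (Suc m) * (Suc m / real m)\<^sup>2" for m
  have "Lo \<longlonglongrightarrow> \<mu> * 1\<^sup>2" "Up \<longlonglongrightarrow> \<mu> * 1\<^sup>2"
    unfolding Lo_def Up_def
    by (intro tendsto_intros T LIMSEQ_Suc[OF T] LIMSEQ_n_over_Suc_n LIMSEQ_Suc_n_over_n)+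
  then have lim: "(\<lambda>n. Lo (floor_sqrt n)) \<longlonglongrightarrow> \<mu>" "(\<lambda>n. Up (floor_sqrt n)) \<longlonglongrightarrow> \<mu>"
    by (simp_all add: filterlim_compose[OF _ filterlim_floor_sqrt_at_top])
  have "Lo (floor_sqrt n) \<le> S n / n \<and> S n / n \<le> Up (floor_sqrt n)" if "0 < n" for n
  proof -
    let ?m = "floor_sqrt n"
    have m: "0 < ?m" "?m\<^sup>2 \<le> n" "n < (Suc ?m)\<^sup>2"
      using that Suc_floor_sqrt_power2_gt[of n] by simp_all
    have "Lo ?m = S (?m\<^sup>2) / real ((Suc ?m)\<^sup>2)" "Up ?m = S ((Suc ?m)\<^sup>2) / real (?m\<^sup>2)"
      using m(1) by (simp_all add: Lo_def Up_def T_def power_divide)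
    then show ?thesis
      using mono_average_between_squares[OF S m] by simp
  qed
  then have "eventually (\<lambda>n. Lo (floor_sqrt n) \<le> S n / n \<and> S n / n \<le> Up (floor_sqrt n)) sequentially"
    by (intro eventually_sequentiallyI[of 1]) simp
  then show ?thesis
    unfolding S_def[symmetric]
    by (intro tendsto_sandwich[OF _ _ lim]) (auto elim: eventually_mono)
qed

locale uncorrelated_sequence = prob_space M for M :: "'a measure" +
  fixes X :: "nat \<Rightarrow> 'a \<Rightarrow> real" and \<mu> m2 :: real
  assumes measurable_X [measurable]: "\<And>k. X k \<in> borel_measurable M"
    and integrable_X: "\<And>k. integrable M (X k)"
    and integrable_mult: "\<And>i j. integrable M (\<lambda>\<omega>. X i \<omega> * X j \<omega>)"
    and expectation_X: "\<And>k. expectation (X k) = \<mu>"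
    and expectation_square: "\<And>k. expectation (\<lambda>\<omega>. (X k \<omega>)\<^sup>2) = m2"
    and uncorrelated: "\<And>i j. i \<noteq> j \<Longrightarrow> expectation (\<lambda>\<omega>. X i \<omega> * X j \<omega>) = \<mu>\<^sup>2"
begin

lemma expectation_sum_deviation_squared:
  "expectation (\<lambda>\<omega>. ((\<Sum>k<n. X k \<omega>) - real n * \<mu>)\<^sup>2) = real n * (m2 - \<mu>\<^sup>2)"
proof -
  have square: "((\<Sum>k<n. X k \<omega>) - real n * \<mu>)\<^sup>2 = (\<Sum>i<n. \<Sum>j<n. (X i \<omega> - \<mu>) * (X j \<omega> - \<mu>))" for \<omega>
  proof -
    have "(\<Sum>k<n. X k \<omega>) - real n * \<mu> = (\<Sum>k<n. X k \<omega> - \<mu>)" by (simp add: sum_subtractf)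
    then show ?thesis by (simp add: power2_eq_square sum_product)
  qed
  have covariance: "expectation (\<lambda>\<omega>. (X i \<omega> - \<mu>) * (X j \<omega> - \<mu>)) = (if i = j then m2 - \<mu>\<^sup>2 else 0)"
    for i j
  proof -
    have "expectation (\<lambda>\<omega>. (X i \<omega> - \<mu>) * (X j \<omega> - \<mu>))
        = expectation (\<lambda>\<omega>. X i \<omega> * X j \<omega>) - \<mu> * expectation (X j) - \<mu> * expectation (X i) + \<mu>\<^sup>2"
      by (simp add: algebra_simps integrable_X integrable_mult prob_space power2_eq_square)
    then show ?thesis
      using expectation_X uncorrelated[of i j] expectation_square[of i] by (auto simp: power2_eq_square)
  qed
  have "expectation (\<lambda>\<omega>. ((\<Sum>k<n. X k \<omega>) - real n * \<mu>)\<^sup>2)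
      = (\<Sum>i<n. \<Sum>j<n. expectation (\<lambda>\<omega>. (X i \<omega> - \<mu>) * (X j \<omega> - \<mu>)))"
    unfolding square
    by (subst Bochner_Integration.integral_sum, simp add: algebra_simps integrable_X integrable_mult,
        intro sum.cong refl, subst Bochner_Integration.integral_sum)
      (auto simp: algebra_simps integrable_X integrable_mult)
  also have "\<dots> = (\<Sum>i<n. m2 - \<mu>\<^sup>2)"
    unfolding covariance by (simp add: sum.delta)
  finally show ?thesis by simp
qed

lemma prob_sum_deviation_le:
  assumes "0 < \<epsilon>" "0 < n"
  shows "prob {\<omega>\<in>space M. real n * \<epsilon> \<le> \<bar>(\<Sum>k<n. X k \<omega>) - real n * \<mu>\<bar>}
    \<le> (m2 - \<mu>\<^sup>2) / \<epsilon>\<^sup>2 / real n"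
proof -
  let ?S = "\<lambda>\<omega>. \<Sum>k<n. X k \<omega>"
  have "integrable M (\<lambda>\<omega>. (?S \<omega>)\<^sup>2)"
    unfolding power2_eq_square sum_product by (auto intro!: integrable_mult)
  moreover have "expectation ?S = real n * \<mu>"
    by (simp add: integrable_X expectation_X)
  ultimately have "prob {\<omega>\<in>space M. real n * \<epsilon> \<le> \<bar>?S \<omega> - real n * \<mu>\<bar>}
      \<le> variance ?S / (real n * \<epsilon>)\<^sup>2"
    using Chebyshev_inequality[of ?S "real n * \<epsilon>"] assms by simp
  also have "\<dots> = (m2 - \<mu>\<^sup>2) / \<epsilon>\<^sup>2 / real n"
    using assms \<open>expectation ?S = real n * \<mu>\<close> expectation_sum_deviation_squared[of n]
    by (simp add: power2_eq_square)
  finally show ?thesis .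
qed

text \<open>Along the squares the deviation probabilities are \<open>O(1/m\<^sup>2)\<close>, which is summable,
  so Borel--Cantelli applies.\<close>
lemma AE_eventually_square_averages_close:
  assumes "0 < \<epsilon>"
  shows "AE \<omega> in M. eventually
    (\<lambda>m. \<bar>(\<Sum>k<(Suc m)\<^sup>2. X k \<omega>) / real ((Suc m)\<^sup>2) - \<mu>\<bar> < \<epsilon>) sequentially"
proof -
  define A where "A m = {\<omega>\<in>space M. real ((Suc m)\<^sup>2) * \<epsilon>
      \<le> \<bar>(\<Sum>k<(Suc m)\<^sup>2. X k \<omega>) - real ((Suc m)\<^sup>2) * \<mu>\<bar>}" for m
  have [measurable]: "A m \<in> sets M" for m
    unfolding A_def by measurable
  have "summable (\<lambda>m. (m2 - \<mu>\<^sup>2) / \<epsilon>\<^sup>2 / real ((Suc m)\<^sup>2))"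
    using summable_mult[OF summable_Suc_iff[THEN iffD2, OF inverse_power_summable[of 2]],
        of "(m2 - \<mu>\<^sup>2) / \<epsilon>\<^sup>2"]
    by (simp add: divide_inverse)
  then have "summable (\<lambda>m. measure M (A m))"
    by (rule summable_comparison_test')
      (use prob_sum_deviation_le[OF assms] in \<open>simp add: A_def del: of_nat_power\<close>)
  then have not_A: "AE \<omega> in M. eventually (\<lambda>m. \<omega> \<in> space M - A m) sequentially"
    by (intro borel_cantelli_AE1) (simp_all add: emeasure_eq_measure)
  have close: "\<bar>t / N - \<mu>\<bar> < \<epsilon>" if "\<not> N * \<epsilon> \<le> \<bar>t - N * \<mu>\<bar>" "0 < N" for t N :: real
    using that by (simp add: abs_less_iff field_simps not_le)
  from not_A show ?thesis
  proof (rule AE_mp, intro AE_I2 impI)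
    fix \<omega> assume "\<omega> \<in> space M" and "eventually (\<lambda>m. \<omega> \<in> space M - A m) sequentially"
    then show "eventually
      (\<lambda>m. \<bar>(\<Sum>k<(Suc m)\<^sup>2. X k \<omega>) / real ((Suc m)\<^sup>2) - \<mu>\<bar> < \<epsilon>) sequentially"
      by (elim eventually_mono) (auto simp: A_def intro!: close)
  qed
qed

lemma AE_tendsto_square_averages:
  "AE \<omega> in M. (\<lambda>m. (\<Sum>k<(Suc m)\<^sup>2. X k \<omega>) / real ((Suc m)\<^sup>2)) \<longlonglongrightarrow> \<mu>"
proof -
  have "AE \<omega> in M. \<forall>r::nat. eventually
      (\<lambda>m. \<bar>(\<Sum>k<(Suc m)\<^sup>2. X k \<omega>) / real ((Suc m)\<^sup>2) - \<mu>\<bar> < 1 / Suc r) sequentially"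
    by (subst AE_all_countable) (intro allI AE_eventually_square_averages_close; simp)
  then show ?thesis
  proof (rule AE_mp, intro AE_I2 impI tendstoI)
    fix \<omega> and e :: real
    assume close: "\<forall>r::nat. eventually
      (\<lambda>m. \<bar>(\<Sum>k<(Suc m)\<^sup>2. X k \<omega>) / real ((Suc m)\<^sup>2) - \<mu>\<bar> < 1 / Suc r) sequentially"
      and "0 < e"
    then obtain r :: nat where "1 / Suc r < e"
      using nat_approx_posE by blast
    with close[rule_format, of r]
    show "eventually (\<lambda>m. dist ((\<Sum>k<(Suc m)\<^sup>2. X k \<omega>) / real ((Suc m)\<^sup>2)) \<mu> < e) sequentially"
      by (elim eventually_mono) (simp add: dist_real_def)
  qed
qed

theorem strong_law_nonneg:
  assumes nonneg: "\<And>k \<omega>. \<omega> \<in> space M \<Longrightarrow> 0 \<le> X k \<omega>"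
  shows "AE \<omega> in M. (\<lambda>n. (\<Sum>k<n. X k \<omega>) / real n) \<longlonglongrightarrow> \<mu>"
  using AE_tendsto_square_averages
  by (rule AE_mp) (auto intro!: AE_I2 tendsto_average_of_tendsto_square_averages nonneg)

end

lemma (in prob_space) indep_sets_reindex:
  assumes ind: "indep_sets F I" and inj: "inj_on f J" and sub: "f ` J \<subseteq> I"
  shows "indep_sets (\<lambda>j. F (f j)) J"
  unfolding indep_sets_def
proof (intro conjI ballI allI impI)
  fix j assume "j \<in> J"
  then show "F (f j) \<subseteq> events" using ind sub unfolding indep_sets_def by auto
next
  fix K A assume K: "K \<subseteq> J" "K \<noteq> {}" "finite K" and A: "A \<in> Pi K (\<lambda>j. F (f j))"
  define B where "B i = A (the_inv_into K f i)" for i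
  have injK: "inj_on f K" using inj K(1) by (rule inj_on_subset)
  have Bf: "B (f j) = A j" if "j \<in> K" for j
    unfolding B_def using the_inv_into_f_f[OF injK that] by simp
  have "prob (\<Inter>i\<in>f ` K. B i) = (\<Prod>i\<in>f ` K. prob (B i))"
  proof -
    have H: "\<forall>A\<in>Pi (f ` K) F. prob (\<Inter>j\<in>f ` K. A j) = (\<Prod>j\<in>f ` K. prob (A j))"
      using ind K sub unfolding indep_sets_def
      by (meson finite_imageI image_is_empty image_mono order_trans)
    have "B \<in> Pi (f ` K) F" using A Bf by (auto simp: Pi_iff)
    then show ?thesis using H by blast
  qed
  moreover have "(\<Inter>i\<in>f ` K. B i) = (\<Inter>j\<in>K. A j)" using Bf by auto
  moreover have "(\<Prod>i\<in>f ` K. prob (B i)) = (\<Prod>j\<in>K. prob (A j))"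
    using prod.reindex[OF injK, of "\<lambda>i. prob (B i)"] Bf by simp
  ultimately show "prob (\<Inter>j\<in>K. A j) = (\<Prod>j\<in>K. prob (A j))" by metis
qed

lemma (in prob_space) indep_vars_reindex:
  assumes ind: "indep_vars M' X I" and inj: "inj_on f J" and sub: "f ` J \<subseteq> I"
  shows "indep_vars (\<lambda>j. M' (f j)) (\<lambda>j. X (f j)) J"
  using ind sub unfolding indep_vars_def2
  by (auto intro: indep_sets_reindex[OF _ inj sub])

lemma (in prob_space) distr_indep_std_complex_normal:
  fixes u :: "'a \<Rightarrow> 'd::finite \<Rightarrow> complex"
  assumes indep: "indep_vars (\<lambda>_. borel) (\<lambda>j \<omega>. u \<omega> j) UNIV"
    and distr: "\<And>j. distr M borel (\<lambda>\<omega>. u \<omega> j) = std_complex_normal"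
  shows "u \<in> measurable M (PiM UNIV (\<lambda>_. borel))"
    and "distr M (PiM UNIV (\<lambda>_. borel)) u = std_complex_normal_vec"
proof -
  have rv: "random_variable borel (\<lambda>\<omega>. u \<omega> j)" for j
    using indep unfolding indep_vars_def by auto
  then show "u \<in> measurable M (PiM UNIV (\<lambda>_. borel))"
    by (intro measurable_PiM_single') auto
  have "(\<lambda>\<omega>. \<lambda>j\<in>UNIV. u \<omega> j) = u" by (simp add: fun_eq_iff)
  then show "distr M (PiM UNIV (\<lambda>_. borel)) u = std_complex_normal_vec"
    using indep_vars_iff_distr_eq_PiM[of UNIV "\<lambda>j \<omega>. u \<omega> j" "\<lambda>_. borel"] rv indep
    by (simp add: distr)
qed

lemma (in prob_space)
  fixes u :: "'a \<Rightarrow> 'd::finite \<Rightarrow> complex" and f :: "('d \<Rightarrow> complex) \<Rightarrow> real"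
  assumes indep: "indep_vars (\<lambda>_. borel) (\<lambda>j \<omega>. u \<omega> j) UNIV"
    and distr: "\<And>j. distr M borel (\<lambda>\<omega>. u \<omega> j) = std_complex_normal"
    and [measurable]: "f \<in> borel_measurable (PiM UNIV (\<lambda>_. borel))"
  shows integrable_indep_std_complex_normal:
      "integrable M (\<lambda>\<omega>. f (u \<omega>)) \<longleftrightarrow> integrable std_complex_normal_vec f"
    and integral_indep_std_complex_normal:
      "expectation (\<lambda>\<omega>. f (u \<omega>)) = integral\<^sup>L std_complex_normal_vec f"
proof -
  note u = distr_indep_std_complex_normal[OF indep distr]
  show "integrable M (\<lambda>\<omega>. f (u \<omega>)) \<longleftrightarrow> integrable std_complex_normal_vec f"
    using u by (simp flip: integrable_distr_eq[of u])
  show "expectation (\<lambda>\<omega>. f (u \<omega>)) = integral\<^sup>L std_complex_normal_vec f"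
    using integral_distr[OF u(1), of f] u(2) by simp
qed

context prob_space
begin

context
  fixes U :: "'a \<Rightarrow> nat \<Rightarrow> 'd::finite \<Rightarrow> complex"
  assumes U_indep: "indep_vars (\<lambda>_. borel) (\<lambda>(k, j) \<omega>. U \<omega> k j) UNIV"
begin

lemma indep_vars_row: "indep_vars (\<lambda>_. borel) (\<lambda>j \<omega>. U \<omega> k j) UNIV"
  using indep_vars_reindex[OF U_indep, of "\<lambda>j. (k, j)" UNIV] by (simp add: inj_on_def)

lemma indep_var_rows:
  assumes "i \<noteq> k"
  shows "indep_var (PiM UNIV (\<lambda>_::'d. borel)) (\<lambda>\<omega>. U \<omega> i) (PiM UNIV (\<lambda>_. borel)) (\<lambda>\<omega>. U \<omega> k)"
proof -
  let ?row = "\<lambda>i \<omega>. restrict (\<lambda>p. (\<lambda>(k, j) \<omega>. U \<omega> k j) p \<omega>) ({i} \<times> UNIV)"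
  have row_measurable:
    "(\<lambda>f j. f (i, j)) \<in> measurable (PiM ({i} \<times> UNIV) (\<lambda>_. borel)) (PiM UNIV (\<lambda>_::'d. borel))"
    for i :: nat
    by (rule measurable_PiM_single') (auto simp: space_PiM)
  have "indep_var (PiM ({i} \<times> UNIV) (\<lambda>_. borel)) (?row i) (PiM ({k} \<times> UNIV) (\<lambda>_. borel)) (?row k)"
    by (rule indep_var_restrict[OF U_indep]) (use assms in auto)
  from indep_var_compose[OF this row_measurable row_measurable]
  show ?thesis by (simp add: comp_def)
qed

lemma uncorrelated_sequence_feature_product:
  fixes x y :: "real ^ 'd"
  assumes U_distr: "\<And>k j. distr M borel (\<lambda>\<omega>. U \<omega> k j) = std_complex_normal"
  shows "uncorrelated_sequence M (\<lambda>k \<omega>. feature_product x y s (U \<omega> k))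
           (power_kernel x y s) (power_kernel x y (2 * s))"
proof
  let ?X = "\<lambda>k \<omega>. feature_product x y s (U \<omega> k)"
  note row = distr_indep_std_complex_normal[OF indep_vars_row U_distr]
  note row_integrable = integrable_indep_std_complex_normal[OF indep_vars_row U_distr]
  note row_integral = integral_indep_std_complex_normal[OF indep_vars_row U_distr]
  have [measurable]: "(\<lambda>\<omega>. U \<omega> k) \<in> measurable M (PiM UNIV (\<lambda>_. borel))" for k
    by (rule row(1))
  show "?X k \<in> borel_measurable M" for k
    by measurable
  show integrable: "integrable M (?X k)" for k
    by (simp add: row_integrable integrable_feature_product)
  show "expectation (?X k) = power_kernel x y s" for k
    by (simp add: row_integral integral_feature_product)
  show "expectation (\<lambda>\<omega>. (?X k \<omega>)\<^sup>2) = power_kernel x y (2 * s)" for k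
    by (simp add: feature_product_squared row_integral integral_feature_product)
  have indep: "indep_var borel (?X i) borel (?X k)" if "i \<noteq> k" for i k
    using indep_var_compose[OF indep_var_rows[OF that] borel_measurable_feature_product
        borel_measurable_feature_product]
    by (simp add: comp_def)
  show "integrable M (\<lambda>\<omega>. ?X i \<omega> * ?X k \<omega>)" for i k
  proof (cases "i = k")
    case True
    then show ?thesis
      by (simp add: power2_eq_square[symmetric] feature_product_squared row_integrable
          integrable_feature_product)
  qed (use indep indep_var_integrable integrable in blast)
  show "expectation (\<lambda>\<omega>. ?X i \<omega> * ?X k \<omega>) = (power_kernel x y s)\<^sup>2" if "i \<noteq> k" for i k
    using indep_var_lebesgue_integral[OF indep[OF that] integrable integrable]
    by (simp add: row_integral integral_feature_product power2_eq_square)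
qed

end

end

lemma power_kernel_cos:
  assumes "x \<noteq> 0" "y \<noteq> 0" and cos: "cos \<theta> = (x \<bullet> y) / (norm x * norm y)"
  shows "power_kernel x y s
    = norm x ^ (2 * s) * norm y ^ (2 * s)
      * (\<Sum>i\<le>s. (fact s)^2 * real (s choose i)^2 * (cos \<theta>) ^ (2 * i))"
proof -
  have xy: "x \<bullet> y = cos \<theta> * (norm x * norm y)"
    using assms by (simp add: field_simps)
  have "(x \<bullet> y) ^ (2 * i) * (norm x * norm y) ^ (2 * (s - i))
      = (norm x * norm y) ^ (2 * s) * (cos \<theta>) ^ (2 * i)" if "i \<le> s" for i
  proof -
    have "2 * s = 2 * i + 2 * (s - i)" using that by simp
    then show ?thesis unfolding xy by (simp only: power_add power_mult_distrib mult_ac)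
  qed
  then show ?thesis
    by (simp add: power_kernel_def sum_distrib_left power_mult_distrib mult_ac)
qed

lemma sum_scaled_products:
  "(\<Sum>k<D. (1 / sqrt (real D) * a k) * (1 / sqrt (real D) * b k)) = (\<Sum>k<D. a k * b k) / real D"
  by (simp add: sum_divide_distrib real_sqrt_mult[symmetric] mult_ac)

theorem theorem2:
  fixes M :: "'a measure" and u :: "'a \<Rightarrow> 'd::finite \<Rightarrow> complex"
    and N :: "'b measure" and U :: "'b \<Rightarrow> nat \<Rightarrow> 'd \<Rightarrow> complex"
    and s :: nat and x y :: "real ^ 'd"
  assumes M: "prob_space M"
    and u_indep: "prob_space.indep_vars M (\<lambda>_. borel) (\<lambda>j \<omega>. u \<omega> j) UNIV"
    and u_distr: "\<And>j. distr M borel (\<lambda>\<omega>. u \<omega> j) = std_complex_normal"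
    and N: "prob_space N"
    and U_indep: "prob_space.indep_vars N (\<lambda>_. borel) (\<lambda>(k, j) \<omega>. U \<omega> k j) UNIV"
    and U_distr: "\<And>k j. distr N borel (\<lambda>\<omega>. U \<omega> k j) = std_complex_normal"
  shows
    "integral\<^sup>L M (\<lambda>\<omega>. cmod (rc_dot x (u \<omega>)) ^ (2 * s) * cmod (rc_dot y (u \<omega>)) ^ (2 * s))
       = (\<Sum>i\<le>s. (fact s)^2 * real (s choose i)^2 * (x \<bullet> y) ^ (2 * i)
                   * (norm x * norm y) ^ (2 * (s - i)))
     \<and> (x \<noteq> 0 \<longrightarrow> y \<noteq> 0 \<longrightarrow>
         (\<forall>\<theta>. cos \<theta> = (x \<bullet> y) / (norm x * norm y) \<longrightarrow>
           integral\<^sup>L M (\<lambda>\<omega>. cmod (rc_dot x (u \<omega>)) ^ (2 * s) * cmod (rc_dot y (u \<omega>)) ^ (2 * s))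
             = norm x ^ (2 * s) * norm y ^ (2 * s) *
               (\<Sum>i\<le>s. (fact s)^2 * real (s choose i)^2 * (cos \<theta>) ^ (2 * i))))
     \<and> (AE \<omega> in N.
          (\<lambda>D::nat. \<Sum>k<D. (1 / sqrt (real D) * cmod (rc_dot x (U \<omega> k)) ^ (2 * s))
                            * (1 / sqrt (real D) * cmod (rc_dot y (U \<omega> k)) ^ (2 * s)))
          \<longlonglongrightarrow> (\<Sum>i\<le>s. (fact s)^2 * real (s choose i)^2 * (x \<bullet> y) ^ (2 * i)
                          * (norm x * norm y) ^ (2 * (s - i))))"
proof -
  interpret M: prob_space M by (rule M)
  interpret N: prob_space N by (rule N)
  interpret features: uncorrelated_sequence N "\<lambda>k \<omega>. feature_product x y s (U \<omega> k)"
      "power_kernel x y s" "power_kernel x y (2 * s)"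
    by (rule N.uncorrelated_sequence_feature_product[OF U_indep U_distr])
  have "M.expectation (\<lambda>\<omega>. feature_product x y s (u \<omega>)) = power_kernel x y s"
    by (simp add: M.integral_indep_std_complex_normal[OF u_indep u_distr] integral_feature_product)
  moreover have "AE \<omega> in N.
      (\<lambda>D. (\<Sum>k<D. feature_product x y s (U \<omega> k)) / real D) \<longlonglongrightarrow> power_kernel x y s"
    by (rule features.strong_law_nonneg) (simp add: feature_product_def)
  ultimately show ?thesis
    unfolding power_kernel_def[symmetric] sum_scaled_products
    by (simp add: feature_product_def power_kernel_cos)
qed

end
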